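(* Let $R$ be a commutative ring with identity, $\mathcal S$ an associative $R$-algebra with identity, $\mathcal M$ a $2$-torsion free, jointly prime bimodule over $\mathcal S$, $\delta$ a derivation on $\mathcal S$ and $f:\mathcal S\to\mathcal M$ a bimodule homomorphism over $\mathcal S$. If $D:\mathcal S\to\mathcal M$ is a Jordan $(\delta,f)$-derivation on $\mathcal M$ and $x,y\in\mathcal S$ satisfy $xy=0$, then $D(xy)=D(x)y+f(x)\delta(y)=0$.
   Context: A derivation on $\mathcal S$ is an additive map $\delta$ with $\delta(ab)=\delta(a)b+a\delta(b)$. An additive map $D:\mathcal S\to\mathcal M$ is a Jordan $(\delta,f)$-derivation if $D(x^2)=D(x)x+f(x)\delta(x)$ for all $x\in\mathcal S$. $\mathcal M$ is $2$-torsion free if $2m=0$ implies $m=0$. A proper bisubmodule $\mathcal K$ of $\mathcal M$ is jointly prime if for every left ideal $I$, right ideal $J$ of $\mathcal S$ and bisubmodule $\mathcal N$ of $\mathcal M$, $I\mathcal N J\subseteq\mathcal K$ implies $I\mathcal M J\subseteq\mathcal K$ or $\mathcal N\subseteq\mathcal K$; $\mathcal M$ is jointly prime if $0$ is a jointly prime bisubmodule. *)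

theory Defs
  imports Main
begin

text \<open>The algebra S is a type 'a of class ring_1 (associative, with identity);
 R is a type 'r of class comm_ring_1 acting on S by sm.\<close>

definition algebra_over :: "('r::comm_ring_1 \<Rightarrow> 'a::ring_1 \<Rightarrow> 'a) \<Rightarrow> bool" where
  "algebra_over sm \<longleftrightarrow>
     (\<forall>r q a. sm (r + q) a = sm r a + sm q a) \<and>
     (\<forall>r a b. sm r (a + b) = sm r a + sm r b) \<and>
     (\<forall>r q a. sm (r * q) a = sm r (sm q a)) \<and>
     (\<forall>a. sm 1 a = a) \<and>
     (\<forall>r a b. sm r (a * b) = sm r a * b) \<and>
     (\<forall>r a b. sm r (a * b) = a * sm r b)"

definition bimodule :: "('a::ring_1 \<Rightarrow> 'm::ab_group_add \<Rightarrow> 'm) \<Rightarrow> ('m \<Rightarrow> 'a \<Rightarrow> 'm) \<Rightarrow> bool" where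
  "bimodule lm rm \<longleftrightarrow>
     (\<forall>a b m. lm (a + b) m = lm a m + lm b m) \<and>
     (\<forall>a m n. lm a (m + n) = lm a m + lm a n) \<and>
     (\<forall>a b m. lm (a * b) m = lm a (lm b m)) \<and>
     (\<forall>m. lm 1 m = m) \<and>
     (\<forall>a b m. rm m (a + b) = rm m a + rm m b) \<and>
     (\<forall>a m n. rm (m + n) a = rm m a + rm n a) \<and>
     (\<forall>a b m. rm m (a * b) = rm (rm m a) b) \<and>
     (\<forall>m. rm m 1 = m) \<and>
     (\<forall>a b m. rm (lm a m) b = lm a (rm m b))"

definition two_torsion_free :: "'m::ab_group_add set \<Rightarrow> bool" where
  "two_torsion_free M \<longleftrightarrow> (\<forall>m\<in>M. m + m = 0 \<longrightarrow> m = 0)"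

definition left_ideal :: "'a::ring_1 set \<Rightarrow> bool" where
  "left_ideal I \<longleftrightarrow> 0 \<in> I \<and> (\<forall>x\<in>I. \<forall>y\<in>I. x - y \<in> I) \<and> (\<forall>a. \<forall>x\<in>I. a * x \<in> I)"

definition right_ideal :: "'a::ring_1 set \<Rightarrow> bool" where
  "right_ideal J \<longleftrightarrow> 0 \<in> J \<and> (\<forall>x\<in>J. \<forall>y\<in>J. x - y \<in> J) \<and> (\<forall>a. \<forall>x\<in>J. x * a \<in> J)"

definition bisubmodule :: "('a::ring_1 \<Rightarrow> 'm::ab_group_add \<Rightarrow> 'm) \<Rightarrow> ('m \<Rightarrow> 'a \<Rightarrow> 'm) \<Rightarrow> 'm set \<Rightarrow> bool" where
  "bisubmodule lm rm N \<longleftrightarrow> 0 \<in> N \<and> (\<forall>m\<in>N. \<forall>n\<in>N. m - n \<in> N) \<and>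
     (\<forall>a. \<forall>n\<in>N. lm a n \<in> N) \<and> (\<forall>a. \<forall>n\<in>N. rm n a \<in> N)"

text \<open>I N J \<subseteq> K: since K is an additive subgroup, this is equivalent to all
 products i n j lying in K.\<close>

definition prod_sub :: "('a::ring_1 \<Rightarrow> 'm::ab_group_add \<Rightarrow> 'm) \<Rightarrow> ('m \<Rightarrow> 'a \<Rightarrow> 'm) \<Rightarrow> 'a set \<Rightarrow> 'm set \<Rightarrow> 'a set \<Rightarrow> 'm set \<Rightarrow> bool" where
  "prod_sub lm rm I N J K \<longleftrightarrow> (\<forall>i\<in>I. \<forall>n\<in>N. \<forall>j\<in>J. lm i (rm n j) \<in> K)"

definition jointly_prime_bisubmodule :: "('a::ring_1 \<Rightarrow> 'm::ab_group_add \<Rightarrow> 'm) \<Rightarrow> ('m \<Rightarrow> 'a \<Rightarrow> 'm) \<Rightarrow> 'm set \<Rightarrow> bool" where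
  "jointly_prime_bisubmodule lm rm K \<longleftrightarrow> bisubmodule lm rm K \<and> K \<noteq> UNIV \<and>
     (\<forall>I J N. left_ideal I \<and> right_ideal J \<and> bisubmodule lm rm N \<and> prod_sub lm rm I N J K
        \<longrightarrow> prod_sub lm rm I UNIV J K \<or> N \<subseteq> K)"

definition jointly_prime :: "('a::ring_1 \<Rightarrow> 'm::ab_group_add \<Rightarrow> 'm) \<Rightarrow> ('m \<Rightarrow> 'a \<Rightarrow> 'm) \<Rightarrow> bool" where
  "jointly_prime lm rm \<longleftrightarrow> jointly_prime_bisubmodule lm rm {0}"

definition derivation :: "('a::ring_1 \<Rightarrow> 'a) \<Rightarrow> bool" where
  "derivation d \<longleftrightarrow> (\<forall>a b. d (a + b) = d a + d b) \<and> (\<forall>a b. d (a * b) = d a * b + a * d b)"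

definition bimodule_hom :: "('a::ring_1 \<Rightarrow> 'm::ab_group_add \<Rightarrow> 'm) \<Rightarrow> ('m \<Rightarrow> 'a \<Rightarrow> 'm) \<Rightarrow> ('a \<Rightarrow> 'm) \<Rightarrow> bool" where
  "bimodule_hom lm rm f \<longleftrightarrow> (\<forall>a b. f (a + b) = f a + f b) \<and>
     (\<forall>a x. f (a * x) = lm a (f x)) \<and> (\<forall>x a. f (x * a) = rm (f x) a)"

definition jordan_df_derivation :: "('a::ring_1 \<Rightarrow> 'm::ab_group_add \<Rightarrow> 'm) \<Rightarrow> ('m \<Rightarrow> 'a \<Rightarrow> 'm) \<Rightarrow> ('a \<Rightarrow> 'a) \<Rightarrow> ('a \<Rightarrow> 'm) \<Rightarrow> ('a \<Rightarrow> 'm) \<Rightarrow> bool" where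
  "jordan_df_derivation lm rm d f D \<longleftrightarrow> (\<forall>a b. D (a + b) = D a + D b) \<and>
     (\<forall>x. D (x * x) = rm (D x) x + rm (f x) (d x))"

end

theory Submission
  imports Defs
begin

text \<open>Since S has an identity, linearising the Jordan identity at a + 1 gives
 D a = D(1) a + f(1) \<delta>(a). Hence D is a genuine (\<delta>,f)-derivation,
 D(xy) = D(x) y + f(x) \<delta>(y) for all x, y, and the claim follows from D(0) = 0.\<close>

lemma additive_zero:
  fixes g :: "'a::ab_group_add \<Rightarrow> 'b::ab_group_add"
  assumes "\<And>a b. g (a + b) = g a + g b"
  shows "g 0 = 0"
  using assms[of 0 0] by simp

lemma bimodule_right_action_zero:
  assumes "bimodule lm rm"
  shows "rm m 0 = 0"
  using assms unfolding bimodule_def by (intro additive_zero[of "rm m"]) auto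

lemma derivation_one:
  assumes "derivation d"
  shows "d 1 = 0"
  using assms unfolding derivation_def by (metis add_cancel_right_left mult_1_left mult_1_right)

lemma bimodule_hom_eq_right_action_one:
  assumes "bimodule_hom lm rm f"
  shows "f a = rm (f 1) a"
  using assms unfolding bimodule_hom_def by (metis mult_1_left)

lemma jordan_df_derivation_determined_by_one:
  assumes "bimodule lm rm" and "derivation d" and "bimodule_hom lm rm f"
    and "jordan_df_derivation lm rm d f D"
  shows "D a = rm (D 1) a + rm (f 1) (d a)"
proof -
  have dadd: "\<And>a b. d (a + b) = d a + d b"
    using assms(2) unfolding derivation_def by blast
  have Dadd: "\<And>a b. D (a + b) = D a + D b"
    and Dsq: "\<And>a. D (a * a) = rm (D a) a + rm (f a) (d a)"
    using assms(4) unfolding jordan_df_derivation_def by auto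
  have fadd: "\<And>a b. f (a + b) = f a + f b"
    using assms(3) unfolding bimodule_hom_def by blast
  have rma: "\<And>a b m. rm m (a + b) = rm m a + rm m b"
    and rmm: "\<And>a m n. rm (m + n) a = rm m a + rm n a"
    and rm1: "\<And>m. rm m 1 = m"
    using assms(1) unfolding bimodule_def by auto
  have "D ((a + 1) * (a + 1)) = rm (D (a + 1)) (a + 1) + rm (f (a + 1)) (d (a + 1))"
    by (rule Dsq)
  also have "\<dots> = (rm (D a) a + rm (f a) (d a)) + (D a + rm (D 1) a + D 1 + rm (f 1) (d a))"
    by (simp add: Dadd fadd dadd rma rmm rm1 derivation_one[OF assms(2)]
        bimodule_right_action_zero[OF assms(1)] algebra_simps)
  moreover have "D ((a + 1) * (a + 1)) = (rm (D a) a + rm (f a) (d a)) + (D a + D a + D 1)"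
    by (simp add: distrib_left distrib_right Dadd Dsq algebra_simps)
  ultimately show ?thesis
    by (simp add: algebra_simps)
qed

lemma jordan_df_derivation_mult:
  assumes "bimodule lm rm" and "derivation d" and "bimodule_hom lm rm f"
    and "jordan_df_derivation lm rm d f D"
  shows "D (x * y) = rm (D x) y + rm (f x) (d y)"
proof -
  have rma: "\<And>a b m. rm m (a + b) = rm m a + rm m b"
    and rmm: "\<And>a m n. rm (m + n) a = rm m a + rm n a"
    and rmmul: "\<And>a b m. rm m (a * b) = rm (rm m a) b"
    using assms(1) unfolding bimodule_def by auto
  have "D (x * y) = rm (D 1) (x * y) + rm (f 1) (d (x * y))"
    by (rule jordan_df_derivation_determined_by_one[OF assms])
  also have "\<dots> = rm (D 1) (x * y) + rm (f 1) (d x * y + x * d y)"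
    using assms(2) unfolding derivation_def by simp
  also have "\<dots> = rm (rm (D 1) x + rm (f 1) (d x)) y + rm (rm (f 1) x) (d y)"
    by (simp add: rma rmm rmmul add_ac)
  also have "\<dots> = rm (D x) y + rm (f x) (d y)"
    by (simp only: jordan_df_derivation_determined_by_one[OF assms, of x]
        bimodule_hom_eq_right_action_one[OF assms(3), of x])
  finally show ?thesis .
qed

theorem lemma3p11:
  fixes sm :: "'r::comm_ring_1 \<Rightarrow> 'a::ring_1 \<Rightarrow> 'a"
    and lm :: "'a \<Rightarrow> 'm::ab_group_add \<Rightarrow> 'm" and rm :: "'m \<Rightarrow> 'a \<Rightarrow> 'm"
    and d :: "'a \<Rightarrow> 'a" and f :: "'a \<Rightarrow> 'm" and D :: "'a \<Rightarrow> 'm"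
    and x y :: 'a
  assumes "algebra_over sm"
    and "bimodule lm rm"
    and "two_torsion_free (UNIV :: 'm set)"
    and "jointly_prime lm rm"
    and "derivation d"
    and "bimodule_hom lm rm f"
    and "jordan_df_derivation lm rm d f D"
    and "x * y = 0"
  shows "D (x * y) = rm (D x) y + rm (f x) (d y) \<and> rm (D x) y + rm (f x) (d y) = 0"
proof -
  have product_rule: "D (x * y) = rm (D x) y + rm (f x) (d y)"
    using jordan_df_derivation_mult[OF assms(2,5,6,7)] .
  have "D 0 = 0"
    using assms(7) unfolding jordan_df_derivation_def by (intro additive_zero) auto
  with product_rule \<open>x * y = 0\<close> show ?thesis by simp
qed

end
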